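(* Let $r\geq 2$ and let $E$ be the set of idempotents of the free inverse monoid $\mathrm{FIM}_r$ of rank $r$. Then the exponential growth rate of the idempotents is \[\limsup_{K\to\infty}|S(K)\cap E|^{1/K}=\lim_{k\to\infty}|S(2k)\cap E|^{1/(2k)}=\left(\frac{2r-1}{2r-2}\right)^{r-1}\sqrt{2r-1}.\] Moreover, the ratio of this growth rate to $\sqrt{e(2r-1)}$ tends to $1$ as $r\to\infty$.
   Context: $\mathrm{FIM}_r$ is the free inverse monoid on a set $X$ with $|X|=r$. It is generated as a monoid by $X\cup X^{-1}$, where $X^{-1}$ is a disjoint copy of $X$ consisting of formal inverses. The length of an element is the minimal length of a word over $X\cup X^{-1}$ representing it. $S(K)$ is the set of elements of length exactly $K$. An idempotent is an element $e$ with $e^2=e$. In Munn's model these are exactly the pairs $(T,1)$, and $S(K)\cap E$ is empty when $K$ is odd. *)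

theory Defs
  imports "HOL-Analysis.Analysis"
begin

text \<open>Generators of FIM_r: X = {0..<r}. A letter is (i, False) for the generator x_i
  and (i, True) for its formal inverse x_i^{-1}. Words are lists of letters.\<close>

type_synonym letter = "nat \<times> bool"

definition words :: "nat \<Rightarrow> letter list set" where
  "words r = {w. \<forall>l \<in> set w. fst l < r}"

definition winv :: "letter list \<Rightarrow> letter list" where
  "winv w = rev (map (\<lambda>(i, b). (i, \<not> b)) w)"

inductive wag :: "letter list \<Rightarrow> letter list \<Rightarrow> bool" where
  wag_refl: "wag w w"
| wag_sym: "wag u v \<Longrightarrow> wag v u"
| wag_trans: "wag u v \<Longrightarrow> wag v w \<Longrightarrow> wag u w"
| wag_cong: "wag u v \<Longrightarrow> wag (p @ u @ q) (p @ v @ q)"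
| wag_inv: "wag (w @ winv w @ w) w"
| wag_comm: "wag (u @ winv u @ v @ winv v) (v @ winv v @ u @ winv u)"

text \<open>The element of FIM_r represented by a word (as its equivalence class of words over X \<union> X^{-1}).\<close>

definition fim_elem :: "nat \<Rightarrow> letter list \<Rightarrow> letter list set" where
  "fim_elem r w = {v \<in> words r. wag v w}"

definition FIM :: "nat \<Rightarrow> letter list set set" where
  "FIM r = fim_elem r ` words r"

definition fim_length :: "letter list set \<Rightarrow> nat" where
  "fim_length c = (LEAST n. \<exists>v \<in> c. length v = n)"

definition fim_idem :: "nat \<Rightarrow> letter list set \<Rightarrow> bool" where
  "fim_idem r c = (\<exists>w \<in> words r. c = fim_elem r w \<and> fim_elem r (w @ w) = c)"

definition idem_count :: "nat \<Rightarrow> nat \<Rightarrow> nat" where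
  "idem_count r K = card {c \<in> FIM r. fim_length c = K \<and> fim_idem r c}"

definition idem_growth :: "nat \<Rightarrow> real" where
  "idem_growth r = ((2 * real r - 1) / (2 * real r - 2)) ^ (r - 1) * sqrt (2 * real r - 1)"

end

theory Submission
  imports Defs
begin

text \<open>By Munn's solution of the word problem, the class of a word in FIM_r is determined
  by its free reduction together with its Munn tree, the set of free reductions of its
  prefixes. Idempotents are the classes with trivial free reduction, and a shortest
  representative walks around its Munn tree, crossing every edge twice. So the idempotents
  of length 2k are counted by the finite rooted subtrees with k + 1 vertices of the Cayley
  tree of the free group, in which the root has 2r children and every other vertex
  m = 2r - 1 children.

  The generating function g of rooted subtrees of the m-ary tree satisfies
  g = x (1 + g)^m; its radius of convergence is x0 = (m - 1)^(m - 1) / m^m, where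
  g(x0) = 1 / (m - 1). Truncating by depth gives the upper bound x0^(-n) (up to a constant)
  on the number of subtrees with n vertices; for the matching lower bound, the counts are
  supermultiplicative, and their n-th roots cannot stay below 1 / x0 because the truncated
  sums diverge for every x > x0. Hence the idempotents grow like (1 / x0)^(1/2) per letter,
  which for m = 2r - 1 is ((2r - 1) / (2r - 2))^(r - 1) (2r - 1)^(1/2); the first factor
  is (1 + 1 / (2r - 2))^(r - 1), which tends to e^(1/2).\<close>

definition inv_letter :: "letter \<Rightarrow> letter" where
  "inv_letter l = (fst l, \<not> snd l)"

lemma inv_letter_inv_letter [simp]: "inv_letter (inv_letter x) = x"
  by (simp add: inv_letter_def)

lemma inv_letter_neq [simp]: "inv_letter x \<noteq> x" "x \<noteq> inv_letter x"
  by (auto simp: inv_letter_def prod_eq_iff)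

lemma fst_inv_letter [simp]: "fst (inv_letter x) = fst x"
  by (simp add: inv_letter_def)

lemma winv_eq_rev_map: "winv w = rev (map inv_letter w)"
  by (simp add: winv_def inv_letter_def case_prod_unfold)

lemma winv_Nil [simp]: "winv [] = []"
  and winv_append [simp]: "winv (a @ b) = winv b @ winv a"
  and winv_single [simp]: "winv [x] = [inv_letter x]"
  and winv_winv [simp]: "winv (winv a) = a"
  and length_winv [simp]: "length (winv a) = length a"
  by (simp_all add: winv_eq_rev_map rev_map comp_def)

lemma words_append [simp]: "a @ b \<in> words r \<longleftrightarrow> a \<in> words r \<and> b \<in> words r"
  by (auto simp: words_def)

lemma words_take: "w \<in> words r \<Longrightarrow> take k w \<in> words r"
  by (auto simp: words_def dest: in_set_takeD)


subsection \<open>Free reduction\<close>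

definition red_step :: "letter list \<Rightarrow> letter \<Rightarrow> letter list" where
  "red_step s x = (if s \<noteq> [] \<and> last s = inv_letter x then butlast s else s @ [x])"

definition free_red :: "letter list \<Rightarrow> letter list" where
  "free_red w = foldl red_step [] w"

fun reduced :: "letter list \<Rightarrow> bool" where
  "reduced (x # y # s) = (y \<noteq> inv_letter x \<and> reduced (y # s))"
| "reduced _ = True"

definition reduced_words :: "nat \<Rightarrow> letter list set" where
  "reduced_words r = {w \<in> words r. reduced w}"

lemma reduced_snoc:
  "reduced (s @ [x]) \<longleftrightarrow> reduced s \<and> (s \<noteq> [] \<longrightarrow> x \<noteq> inv_letter (last s))"
  by (induction s rule: reduced.induct) auto

lemma reduced_butlast: "reduced s \<Longrightarrow> reduced (butlast s)"
  by (cases s rule: rev_cases) (auto simp: reduced_snoc)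

lemma reduced_red_step: "reduced s \<Longrightarrow> reduced (red_step s x)"
  by (auto simp: red_step_def reduced_snoc reduced_butlast)

lemma reduced_foldl_red_step: "reduced s \<Longrightarrow> reduced (foldl red_step s w)"
  by (induction w arbitrary: s) (auto simp: reduced_red_step)

lemma reduced_free_red: "reduced (free_red w)"
  unfolding free_red_def by (rule reduced_foldl_red_step) simp

lemma free_red_Nil [simp]: "free_red [] = []"
  by (simp add: free_red_def)

lemma free_red_snoc: "free_red (w @ [x]) = red_step (free_red w) x"
  by (simp add: free_red_def)

lemma free_red_append_foldl: "free_red (a @ b) = foldl red_step (free_red a) b"
  by (simp add: free_red_def)

lemma free_red_snoc_cases:
  obtains s where "free_red w = s @ [inv_letter x]" "free_red (w @ [x]) = s"
  | "\<not> (free_red w \<noteq> [] \<and> last (free_red w) = inv_letter x)"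
    "free_red (w @ [x]) = free_red w @ [x]"
  by (cases "free_red w" rule: rev_cases) (auto simp: free_red_snoc red_step_def)

lemma free_red_reduced: "reduced s \<Longrightarrow> free_red s = s"
  by (induction s rule: rev_induct) (auto simp: free_red_snoc reduced_snoc red_step_def)

lemma free_red_free_red [simp]: "free_red (free_red w) = free_red w"
  by (rule free_red_reduced[OF reduced_free_red])

lemma red_step_red_step: "reduced t \<Longrightarrow> red_step (red_step t y) (inv_letter y) = t"
proof (cases "t \<noteq> [] \<and> last t = inv_letter y")
  case True
  assume "reduced t"
  moreover obtain t' where "t = t' @ [inv_letter y]" using True by (cases t rule: rev_cases) auto
  ultimately show ?thesis by (auto simp: red_step_def reduced_snoc)
qed (auto simp: red_step_def)

lemma foldl_red_step_free_red:
  "reduced s \<Longrightarrow> foldl red_step s b = foldl red_step s (free_red b)"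
proof (induction b rule: rev_induct)
  case (snoc x b)
  then have IH: "foldl red_step s b = foldl red_step s (free_red b)" by simp
  show ?case
  proof (cases b x rule: free_red_snoc_cases)
    case (1 c)
    have "foldl red_step s (b @ [x]) = red_step (red_step (foldl red_step s c) (inv_letter x)) x"
      using IH 1 by simp
    also have "\<dots> = foldl red_step s c"
      using red_step_red_step[OF reduced_foldl_red_step[OF snoc.prems], of c "inv_letter x"] by simp
    finally show ?thesis using 1 by simp
  next
    case 2
    then show ?thesis using IH by simp
  qed
qed simp

lemma free_red_append: "free_red (a @ b) = free_red (free_red a @ free_red b)"
  unfolding free_red_append_foldl[of "free_red a"] free_red_free_red
  by (simp add: free_red_append_foldl foldl_red_step_free_red[OF reduced_free_red, of a b])

lemma free_red_append_left: "free_red (a @ b) = free_red (free_red a @ b)"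
  by (simp add: free_red_append_foldl)

lemma free_red_append_right: "free_red (a @ b) = free_red (a @ free_red b)"
  by (metis free_red_append free_red_free_red)

lemma free_red_winv: "free_red (w @ winv w) = []"
proof (induction w rule: rev_induct)
  case (snoc x w)
  have "free_red ((w @ [x]) @ winv (w @ [x]))
      = foldl red_step (red_step (red_step (free_red w) x) (inv_letter x)) (winv w)"
    by (simp add: free_red_append_foldl free_red_snoc)
  also have "\<dots> = foldl red_step (free_red w) (winv w)"
    using red_step_red_step[OF reduced_free_red, of w x] by simp
  also have "\<dots> = []" using snoc by (simp add: free_red_append_foldl)
  finally show ?case .
qed simp

lemma free_red_winv_left: "free_red (winv w @ w) = []"
  using free_red_winv[of "winv w"] by simp

lemma free_red_cancel_pair: "free_red (x # inv_letter x # s) = free_red s"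
  using free_red_append_left[of "[x, inv_letter x]" s] free_red_winv[of "[x]"] by simp

lemma set_free_red: "set (free_red w) \<subseteq> set w"
proof -
  have step: "set (red_step s x) \<subseteq> set s \<union> {x}" for s x
    by (auto simp: red_step_def dest: in_set_butlastD)
  have "set (foldl red_step s w) \<subseteq> set s \<union> set w" for s
  proof (induction w arbitrary: s)
    case (Cons x w)
    then show ?case using step[of s x] by fastforce
  qed simp
  from this[of "[]"] show ?thesis by (simp add: free_red_def)
qed

lemma free_red_reduced_words: "w \<in> words r \<Longrightarrow> free_red w \<in> reduced_words r"
  using set_free_red by (auto simp: words_def reduced_words_def reduced_free_red)


subsection \<open>Munn trees\<close>

definition prefix_closed :: "'a list set \<Rightarrow> bool" where
  "prefix_closed S \<longleftrightarrow> (\<forall>p\<in>S. \<forall>k. take k p \<in> S)"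

definition finite_subtrees :: "'a list set \<Rightarrow> 'a list set set" where
  "finite_subtrees A = {S. finite S \<and> [] \<in> S \<and> prefix_closed S \<and> S \<subseteq> A}"

definition munn_tree :: "letter list \<Rightarrow> letter list set" where
  "munn_tree w = (\<lambda>i. free_red (take i w)) ` {0..length w}"

lemma finite_munn_tree [simp]: "finite (munn_tree w)"
  by (simp add: munn_tree_def)

lemma Nil_in_munn_tree [simp]: "[] \<in> munn_tree w"
  unfolding munn_tree_def by (rule image_eqI[of _ _ 0]) auto

lemma free_red_in_munn_tree [simp]: "free_red w \<in> munn_tree w"
  unfolding munn_tree_def by (rule image_eqI[of _ _ "length w"]) auto

lemma munn_tree_free_red: "s \<in> munn_tree w \<Longrightarrow> free_red s = s"
  by (auto simp: munn_tree_def)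

lemma munn_tree_Nil: "munn_tree [] = {[]}"
  by (simp add: munn_tree_def)

lemma munn_tree_snoc: "munn_tree (w @ [x]) = insert (free_red (w @ [x])) (munn_tree w)"
proof -
  have "{0..length (w @ [x])} = insert (Suc (length w)) {0..length w}" by auto
  then show ?thesis by (auto simp: munn_tree_def intro!: image_cong)
qed

lemma munn_tree_append:
  "munn_tree (u @ v) = munn_tree u \<union> (\<lambda>s. free_red (u @ s)) ` munn_tree v"
proof -
  have "munn_tree (u @ v) = (\<lambda>i. free_red (take i (u @ v))) `
      ({0..length u} \<union> (\<lambda>j. length u + j) ` {0..length v})"
    unfolding munn_tree_def
    by (intro arg_cong[where f="image _"]) (auto simp: image_iff intro: exI[of _ "_ - length u"])
  also have "\<dots> = munn_tree u \<union> (\<lambda>j. free_red (u @ take j v)) ` {0..length v}"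
    unfolding munn_tree_def image_Un image_image by (intro arg_cong2[where f="(\<union>)"] image_cong) auto
  also have "(\<lambda>j. free_red (u @ take j v)) ` {0..length v} = (\<lambda>s. free_red (u @ s)) ` munn_tree v"
    by (auto simp: munn_tree_def image_image free_red_append_right[of u "take _ v"])
  finally show ?thesis .
qed

lemma munn_tree_append_idem:
  assumes "free_red u = []"
  shows "munn_tree (u @ v) = munn_tree u \<union> munn_tree v"
proof -
  have "free_red (u @ s) = s" if "s \<in> munn_tree v" for s
    using free_red_append_left[of u s] assms munn_tree_free_red[OF that] by simp
  then show ?thesis by (force simp: munn_tree_append)
qed

lemma munn_tree_winv: "munn_tree (w @ winv w) = munn_tree w"
proof -
  have "free_red (w @ s) \<in> munn_tree w" if "s \<in> munn_tree (winv w)" for s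
  proof -
    from that obtain j where j: "j \<le> length w" "s = free_red (take j (winv w))"
      unfolding munn_tree_def by auto
    define i where "i = length w - j"
    have "take j (winv w) = winv (drop i w)"
      using j by (simp add: winv_eq_rev_map i_def take_rev take_map drop_map)
    then have "free_red (w @ s) = free_red (take i w @ drop i w @ winv (drop i w))"
      using j free_red_append_right by (metis append.assoc append_take_drop_id)
    also have "\<dots> = free_red (take i w)"
      by (metis free_red_append_right free_red_winv append_Nil2 free_red_free_red)
    finally show ?thesis unfolding munn_tree_def i_def by auto
  qed
  then show ?thesis by (auto simp: munn_tree_append)
qed

lemma take_free_red_in_munn_tree: "take k (free_red w) \<in> munn_tree w"
proof (induction w arbitrary: k rule: rev_induct)
  case (snoc x w)
  show ?case
  proof (cases w x rule: free_red_snoc_cases)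
    case (1 s)
    then have "take k (free_red (w @ [x])) = take (min k (length s)) (free_red w)"
      by (simp add: min_def)
    then show ?thesis using snoc[of "min k (length s)"] by (simp add: munn_tree_snoc)
  next
    case 2
    then show ?thesis
      using snoc[of k] by (cases "k \<le> length (free_red w)") (simp_all add: munn_tree_snoc)
  qed
qed (simp add: munn_tree_Nil)

lemma munn_tree_in_finite_subtrees: "w \<in> words r \<Longrightarrow> munn_tree w \<in> finite_subtrees (reduced_words r)"
proof -
  have "munn_tree (take i w) \<subseteq> munn_tree w" for i
    by (auto simp: munn_tree_def min_def intro!: image_eqI)
  then have "take k t \<in> munn_tree w" if "t \<in> munn_tree w" for t k
    using that take_free_red_in_munn_tree unfolding munn_tree_def by blast
  then have "prefix_closed (munn_tree w)" by (simp add: prefix_closed_def)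
  moreover assume "w \<in> words r"
  then have "munn_tree w \<subseteq> reduced_words r"
    by (auto simp: munn_tree_def intro: free_red_reduced_words words_take)
  ultimately show ?thesis by (simp add: finite_subtrees_def)
qed

text \<open>Each letter adds at most one vertex, and it adds none when it cancels, which
  shortens the free reduction.\<close>

lemma card_munn_tree_le: "2 * card (munn_tree w) \<le> length w + length (free_red w) + 2"
proof (induction w rule: rev_induct)
  case (snoc x w)
  show ?case
  proof (cases w x rule: free_red_snoc_cases)
    case (1 s)
    then have "take (length s) (free_red w) = free_red (w @ [x])" by simp
    then have "munn_tree (w @ [x]) = munn_tree w"
      using take_free_red_in_munn_tree[of "length s" w] by (simp add: munn_tree_snoc insert_absorb)
    then show ?thesis using snoc 1 by simp
  next
    case 2
    then show ?thesis using snoc by (simp add: munn_tree_snoc card_insert_if)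
  qed
qed (simp add: munn_tree_Nil)


subsection \<open>Free reduction and Munn tree are invariants of the Wagner congruence\<close>

lemma free_red_wag_inv: "free_red (w @ winv w @ w) = free_red w"
  by (metis append.assoc append_Nil free_red_append_left free_red_winv)

lemma munn_tree_wag_inv: "munn_tree (w @ winv w @ w) = munn_tree w"
proof -
  have "free_red (w @ free_red (winv w @ s)) = s" if "s \<in> munn_tree w" for s
    using free_red_winv[of w] munn_tree_free_red[OF that]
    by (metis append.assoc free_red_append_left free_red_append_right append_Nil)
  then have "(\<lambda>s. free_red (w @ s)) ` munn_tree (winv w @ w) \<subseteq> munn_tree w"
    using munn_tree_winv[of w] by (auto simp: munn_tree_append)
  then show ?thesis by (auto simp: munn_tree_append)
qed

lemma munn_tree_wag_comm:
  "munn_tree (u @ winv u @ v @ winv v) = munn_tree u \<union> munn_tree v"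
  using munn_tree_append_idem[OF free_red_winv, of u "v @ winv v"]
  by (simp add: munn_tree_winv)

lemma wag_invariants: "wag u v \<Longrightarrow> free_red u = free_red v \<and> munn_tree u = munn_tree v"
proof (induction rule: wag.induct)
  case (wag_cong u v p q)
  have "free_red (p @ u @ q) = free_red (p @ free_red (free_red u @ q))"
    and "free_red (p @ v @ q) = free_red (p @ free_red (free_red v @ q))"
    by (metis free_red_append_left free_red_append_right)+
  moreover have "munn_tree (p @ u @ q) = munn_tree p \<union> (\<lambda>s. free_red (p @ s)) `
      (munn_tree u \<union> (\<lambda>s. free_red (free_red u @ s)) ` munn_tree q)"
    and "munn_tree (p @ v @ q) = munn_tree p \<union> (\<lambda>s. free_red (p @ s)) `
      (munn_tree v \<union> (\<lambda>s. free_red (free_red v @ s)) ` munn_tree q)"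
    by (simp_all add: munn_tree_append free_red_append_left[of u] free_red_append_left[of v])
  ultimately show ?case using wag_cong.IH by simp
next
  case (wag_comm u v)
  have "free_red (a @ winv a @ b @ winv b) = []" for a b
    by (metis append.assoc append_Nil free_red_append_left free_red_winv)
  then show ?case by (auto simp: munn_tree_wag_comm)
qed (simp_all add: free_red_wag_inv munn_tree_wag_inv)


subsection \<open>Words with the same Munn tree and trivial free reduction are congruent\<close>

lemma wag_append: "wag a b \<Longrightarrow> wag c d \<Longrightarrow> wag (a @ c) (b @ d)"
  using wag_cong[of a b "[]" c] wag_cong[of c d b "[]"] by (auto intro: wag_trans)

lemma wag_append_left: "wag c d \<Longrightarrow> wag (a @ c) (a @ d)"
  by (rule wag_append[OF wag_refl])

lemma wag_append_right: "wag a b \<Longrightarrow> wag (a @ c) (b @ c)"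
  by (rule wag_append[OF _ wag_refl])

definition idem_word :: "letter list \<Rightarrow> letter list" where
  "idem_word p = p @ winv p"

definition idem_prod :: "letter list list \<Rightarrow> letter list" where
  "idem_prod L = concat (map idem_word L)"

lemma idem_prod_Nil [simp]: "idem_prod [] = []"
  and idem_prod_Cons [simp]: "idem_prod (p # L) = idem_word p @ idem_prod L"
  by (simp_all add: idem_prod_def)

lemma wag_idem_word_comm: "wag (idem_word p @ idem_word q) (idem_word q @ idem_word p)"
  using wag_comm[of p q] by (simp add: idem_word_def)

lemma wag_idem_word_idem: "wag (idem_word p @ idem_word p) (idem_word p)"
  using wag_append_right[OF wag_inv[of p], of "winv p"] by (simp add: idem_word_def)

lemma wag_idem_word_prod_comm: "wag (idem_word p @ idem_prod L) (idem_prod L @ idem_word p)"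
proof (induction L)
  case (Cons q L)
  have "wag (idem_word p @ idem_word q @ idem_prod L) (idem_word q @ idem_word p @ idem_prod L)"
    using wag_append_right[OF wag_idem_word_comm[of p q], of "idem_prod L"] by simp
  with wag_append_left[OF Cons.IH, of "idem_word q"] show ?case by (auto intro: wag_trans)
qed (simp add: wag_refl)

lemma wag_idem_word_prod_absorb: "p \<in> set L \<Longrightarrow> wag (idem_word p @ idem_prod L) (idem_prod L)"
proof (induction L)
  case (Cons q L)
  show ?case
  proof (cases "p = q")
    case True
    then show ?thesis using wag_append_right[OF wag_idem_word_idem[of p], of "idem_prod L"] by simp
  next
    case False
    then have "wag (idem_word q @ idem_word p @ idem_prod L) (idem_word q @ idem_prod L)"
      using Cons by (auto intro: wag_append_left)
    moreover have "wag (idem_word p @ idem_word q @ idem_prod L) (idem_word q @ idem_word p @ idem_prod L)"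
      using wag_append_right[OF wag_idem_word_comm[of p q], of "idem_prod L"] by simp
    ultimately show ?thesis by (auto intro: wag_trans)
  qed
qed simp

lemma wag_idem_prod_absorb: "set L \<subseteq> set M \<Longrightarrow> wag (idem_prod L @ idem_prod M) (idem_prod M)"
proof (induction L)
  case (Cons p L)
  then have "wag (idem_word p @ idem_prod L @ idem_prod M) (idem_word p @ idem_prod M)"
    by (auto intro: wag_append_left)
  moreover have "wag (idem_word p @ idem_prod M) (idem_prod M)"
    using Cons.prems by (auto intro: wag_idem_word_prod_absorb)
  ultimately show ?case by (auto intro: wag_trans)
qed (simp add: wag_refl)

lemma wag_idem_prod_comm: "wag (idem_prod L @ idem_prod M) (idem_prod M @ idem_prod L)"
proof (induction L)
  case (Cons p L)
  have "wag (idem_word p @ idem_prod M @ idem_prod L) (idem_prod M @ idem_word p @ idem_prod L)"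
    using wag_append_right[OF wag_idem_word_prod_comm[of p M], of "idem_prod L"] by simp
  with wag_append_left[OF Cons.IH, of "idem_word p"] show ?case by (auto intro: wag_trans)
qed (simp add: wag_refl)

lemma wag_idem_prod_set_eq: "set L = set M \<Longrightarrow> wag (idem_prod L) (idem_prod M)"
  using wag_idem_prod_absorb[of M L] wag_idem_prod_comm[of M L] wag_idem_prod_absorb[of L M]
  by (auto intro: wag_trans wag_sym)

definition prefix_reds :: "letter list \<Rightarrow> letter list list" where
  "prefix_reds w = map (\<lambda>i. free_red (take i w)) [0..<Suc (length w)]"

lemma set_prefix_reds: "set (prefix_reds w) = munn_tree w"
  by (simp only: prefix_reds_def munn_tree_def set_map set_upt atLeastLessThanSuc_atLeastAtMost)

lemma prefix_reds_snoc: "prefix_reds (w @ [x]) = prefix_reds w @ [free_red (w @ [x])]"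
  by (simp add: prefix_reds_def)

text \<open>The letter pair x^{-1} x equals the idempotent (s x^{-1})(s x^{-1})^{-1} once s s^{-1}
  is inserted in front, which is where a cancellation in the free reduction is paid for.\<close>

lemma wag_cancel_letter: "wag (s @ [inv_letter x, x]) (idem_word (s @ [inv_letter x]) @ s)"
proof -
  have "wag (s @ [inv_letter x, x]) (s @ idem_word (winv s) @ idem_word [inv_letter x])"
    using wag_append_right[OF wag_sym[OF wag_inv[of s]], of "[inv_letter x, x]"]
    by (simp add: idem_word_def)
  moreover have "wag (s @ idem_word (winv s) @ idem_word [inv_letter x])
      (s @ idem_word [inv_letter x] @ idem_word (winv s))"
    by (rule wag_append_left[OF wag_idem_word_comm])
  ultimately show ?thesis by (auto simp: idem_word_def intro: wag_trans)
qed

lemma wag_normal_form: "wag w (idem_prod (prefix_reds w) @ free_red w)"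
proof (induction w rule: rev_induct)
  case Nil
  then show ?case by (simp add: prefix_reds_def idem_word_def wag_refl)
next
  case (snoc x w)
  define E where "E = idem_prod (prefix_reds w)"
  have IH: "wag (w @ [x]) (E @ free_red w @ [x])"
    using wag_append_right[OF snoc.IH, of "[x]"] by (simp add: E_def)
  have absorb: "wag (E @ s) (E @ idem_word s @ s)" for s
    using wag_append_left[OF wag_sym[OF wag_inv[of s]], of E] by (simp add: idem_word_def)
  have "wag (w @ [x]) (E @ idem_word (free_red (w @ [x])) @ free_red (w @ [x]))"
  proof (cases w x rule: free_red_snoc_cases)
    case (1 s)
    have "wag (idem_word (s @ [inv_letter x]) @ E) E"
      unfolding E_def by (rule wag_idem_word_prod_absorb) (metis set_prefix_reds free_red_in_munn_tree 1(1))
    then have "wag (E @ idem_word (s @ [inv_letter x])) E"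
      using wag_idem_word_prod_comm[of "s @ [inv_letter x]" "prefix_reds w"] unfolding E_def
      by (auto intro: wag_trans wag_sym)
    then have "wag (E @ idem_word (s @ [inv_letter x]) @ s) (E @ s)"
      using wag_append_right by fastforce
    moreover have "wag (E @ free_red w @ [x]) (E @ idem_word (s @ [inv_letter x]) @ s)"
      using wag_append_left[OF wag_cancel_letter[of s x], of E] 1 by simp
    ultimately show ?thesis using IH absorb[of s] 1 by (auto intro: wag_trans)
  next
    case 2
    then show ?thesis using IH absorb[of "free_red w @ [x]"] by (auto intro: wag_trans)
  qed
  then show ?case by (simp add: prefix_reds_snoc E_def idem_prod_def)
qed

theorem wag_if_munn_tree_eq:
  assumes "free_red u = []" "free_red v = []" "munn_tree u = munn_tree v"
  shows "wag u v"
proof -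
  have "wag u (idem_prod (prefix_reds u))" "wag v (idem_prod (prefix_reds v))"
    using wag_normal_form[of u] wag_normal_form[of v] assms by simp_all
  moreover have "wag (idem_prod (prefix_reds u)) (idem_prod (prefix_reds v))"
    using assms by (intro wag_idem_prod_set_eq) (simp add: set_prefix_reds)
  ultimately show ?thesis by (auto intro: wag_trans wag_sym)
qed


subsection \<open>Idempotents and Munn trees\<close>

lemma finite_subtrees_Diff_longest:
  assumes T: "T \<in> finite_subtrees A" and t: "t \<in> T" "t \<noteq> []"
    and longest: "\<And>u. u \<in> T \<Longrightarrow> length u \<le> length t"
  shows "T - {t} \<in> finite_subtrees A"
proof -
  have "take k u \<in> T - {t}" if "u \<in> T - {t}" for u k
  proof (cases "k < length u")
    case True
    then have "length (take k u) < length t" using longest[of u] that by auto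
    then show ?thesis using T that by (auto simp: finite_subtrees_def prefix_closed_def)
  qed (use that in simp)
  then show ?thesis using T t by (auto simp: finite_subtrees_def prefix_closed_def)
qed

lemma munn_tree_insert_pair:
  "munn_tree (a @ [x, inv_letter x] @ b) = insert (free_red (a @ [x])) (munn_tree (a @ b))"
proof -
  have red_pair: "free_red [x, inv_letter x] = []" using free_red_winv[of "[x]"] by simp
  then have "munn_tree [x, inv_letter x] = {[], [x]}"
    using munn_tree_snoc[of "[x]" "inv_letter x"] munn_tree_snoc[of "[]" x]
    by (simp add: munn_tree_Nil free_red_reduced insert_commute)
  then have "munn_tree ([x, inv_letter x] @ b) = {[], [x]} \<union> munn_tree b"
    using munn_tree_append_idem[OF red_pair] by simp
  then show ?thesis by (auto simp: munn_tree_append)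
qed

text \<open>Inserting x x^{-1} at a point where the prefix reduces to p adds the leaf p x.\<close>

lemma munn_tree_add_leaf:
  assumes w: "w \<in> words r" "free_red w = []" and p: "p \<in> munn_tree w"
    and px: "p @ [x] \<in> reduced_words r"
  shows "\<exists>w' \<in> words r. free_red w' = [] \<and> munn_tree w' = insert (p @ [x]) (munn_tree w)
    \<and> length w' = length w + 2"
proof -
  obtain i where i: "i \<le> length w" "p = free_red (take i w)"
    using p by (auto simp: munn_tree_def)
  define w' where "w' = take i w @ [x, inv_letter x] @ drop i w"
  have "w' \<in> words r"
    using w(1) px by (auto simp: w'_def words_def reduced_words_def dest: in_set_takeD in_set_dropD)
  moreover have "free_red w' = []"
    using w(2) free_red_cancel_pair free_red_append_right
    by (metis w'_def append_Cons append_Nil append_take_drop_id)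
  moreover have "free_red (take i w @ [x]) = p @ [x]"
    using i px free_red_append_left[of "take i w" "[x]"]
    by (simp add: free_red_reduced reduced_words_def)
  then have "munn_tree w' = insert (p @ [x]) (munn_tree w)"
    using munn_tree_insert_pair[of "take i w" x "drop i w"] by (simp add: w'_def)
  moreover have "length w' = length w + 2" using i by (simp add: w'_def)
  ultimately show ?thesis by blast
qed

lemma traversal_exists:
  "T \<in> finite_subtrees (reduced_words r) \<Longrightarrow>
    \<exists>w \<in> words r. free_red w = [] \<and> munn_tree w = T \<and> length w = 2 * (card T - 1)"
proof (induction "card T" arbitrary: T)
  case 0
  then show ?case by (auto simp: finite_subtrees_def)
next
  case (Suc n)
  then have T: "finite T" "[] \<in> T" "prefix_closed T" "T \<subseteq> reduced_words r"
    by (auto simp: finite_subtrees_def)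
  show ?case
  proof (cases "T = {[]}")
    case True
    then show ?thesis by (intro bexI[of _ "[]"]) (auto simp: munn_tree_Nil words_def)
  next
    case False
    obtain t where t: "t \<in> T" "\<And>u. u \<in> T \<Longrightarrow> length u \<le> length t"
    proof -
      have "Max (length ` T) \<in> length ` T" using T(1,2) by (intro Max_in) auto
      then obtain t where "t \<in> T" "length t = Max (length ` T)" by auto
      then show thesis using that T(1) by (metis Max_ge finite_imageI imageI)
    qed
    have "t \<noteq> []"
    proof
      assume "t = []"
      then have "u = []" if "u \<in> T" for u using t(2)[OF that] by simp
      then show False using False T(2) by auto
    qed
    then obtain p x where tpx: "t = p @ [x]" by (cases t rule: rev_cases) auto
    have T': "T - {t} \<in> finite_subtrees (reduced_words r)"
      using finite_subtrees_Diff_longest Suc.prems t \<open>t \<noteq> []\<close> by blast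
    have "take (length p) t \<in> T" using T(3) t(1) by (simp add: prefix_closed_def)
    then have "p \<in> T - {t}" using tpx by simp
    have card: "card (T - {t}) = n" using Suc.hyps(2) t(1) T(1) by simp
    obtain w where w: "w \<in> words r" "free_red w = []" "munn_tree w = T - {t}"
      "length w = 2 * (card (T - {t}) - 1)"
      using Suc.hyps(1)[OF card[symmetric] T'] by blast
    have "insert t (T - {t}) = T" using t(1) by blast
    then obtain w' where w': "w' \<in> words r" "free_red w' = []" "munn_tree w' = T"
      "length w' = length w + 2"
      using munn_tree_add_leaf[OF w(1,2), of p x] \<open>p \<in> T - {t}\<close> T(4) t(1) tpx w(3) by auto
    moreover have "card (T - {t}) \<noteq> 0" using T' by (auto simp: finite_subtrees_def)
    ultimately show ?thesis using w(4) card Suc.hyps(2) by (intro bexI[of _ w']) auto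
  qed
qed

definition traversal :: "nat \<Rightarrow> letter list set \<Rightarrow> letter list" where
  "traversal r T = (SOME w. w \<in> words r \<and> free_red w = [] \<and> munn_tree w = T \<and> length w = 2 * (card T - 1))"

lemma traversal:
  assumes "T \<in> finite_subtrees (reduced_words r)"
  shows "traversal r T \<in> words r" "free_red (traversal r T) = []" "munn_tree (traversal r T) = T"
    "length (traversal r T) = 2 * (card T - 1)"
proof -
  have "\<exists>w. w \<in> words r \<and> free_red w = [] \<and> munn_tree w = T \<and> length w = 2 * (card T - 1)"
    using traversal_exists[OF assms] by blast
  from someI_ex[OF this] show "traversal r T \<in> words r" "free_red (traversal r T) = []"
    "munn_tree (traversal r T) = T" "length (traversal r T) = 2 * (card T - 1)"
    unfolding traversal_def by blast+
qed

lemma free_red_square_eq_imp_Nil: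
  assumes "free_red (s @ s) = free_red s"
  shows "free_red s = []"
proof -
  have "free_red (winv s @ s @ s) = free_red (winv s @ s)"
    using assms by (metis free_red_append_right)
  moreover have "free_red (winv s @ s @ s) = free_red s"
    using free_red_append_left[of "winv s @ s" s] by (simp add: free_red_winv_left)
  ultimately show ?thesis by (simp add: free_red_winv_left)
qed

lemma fim_elem_eq_iff_wag: "a \<in> words r \<Longrightarrow> fim_elem r a = fim_elem r b \<longleftrightarrow> wag a b"
  unfolding fim_elem_def by (auto intro: wag_refl wag_trans wag_sym)

lemma fim_elem_square_eq_iff:
  assumes w: "w \<in> words r"
  shows "fim_elem r (w @ w) = fim_elem r w \<longleftrightarrow> free_red w = []"
proof
  assume "fim_elem r (w @ w) = fim_elem r w"
  then have "free_red (w @ w) = free_red w"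
    using fim_elem_eq_iff_wag[of "w @ w" r w] w wag_invariants by simp
  then show "free_red w = []" by (rule free_red_square_eq_imp_Nil)
next
  assume r: "free_red w = []"
  then have "wag (w @ w) w"
    by (intro wag_if_munn_tree_eq) (simp_all add: free_red_append_left munn_tree_append_idem)
  then show "fim_elem r (w @ w) = fim_elem r w"
    using fim_elem_eq_iff_wag[of "w @ w" r w] w by simp
qed

lemma fim_length_idem:
  assumes w: "w \<in> words r" "free_red w = []"
  shows "fim_length (fim_elem r w) = 2 * (card (munn_tree w) - 1)"
  unfolding fim_length_def
proof (rule Least_equality)
  have T: "munn_tree w \<in> finite_subtrees (reduced_words r)"
    using w(1) by (rule munn_tree_in_finite_subtrees)
  have "wag (traversal r (munn_tree w)) w"
    using traversal[OF T] w by (intro wag_if_munn_tree_eq) auto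
  then show "\<exists>v\<in>fim_elem r w. length v = 2 * (card (munn_tree w) - 1)"
    using traversal[OF T] by (auto simp: fim_elem_def)
next
  fix n assume "\<exists>v\<in>fim_elem r w. length v = n"
  then obtain v where v: "wag v w" "length v = n" by (auto simp: fim_elem_def)
  then have "free_red v = []" "munn_tree v = munn_tree w" using wag_invariants w by auto
  then show "2 * (card (munn_tree w) - 1) \<le> n" using card_munn_tree_le[of v] v by simp
qed

lemma idempotents_eq_image_traversal:
  "{c \<in> FIM r. fim_length c = K \<and> fim_idem r c}
    = (\<lambda>T. fim_elem r (traversal r T)) ` {T \<in> finite_subtrees (reduced_words r). 2 * (card T - 1) = K}"
proof (intro equalityI subsetI)
  fix c assume c: "c \<in> {c \<in> FIM r. fim_length c = K \<and> fim_idem r c}"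
  then obtain w where w: "w \<in> words r" "c = fim_elem r w" "fim_elem r (w @ w) = c"
    by (auto simp: fim_idem_def)
  then have rw: "free_red w = []" using fim_elem_square_eq_iff[OF w(1)] by simp
  have T: "munn_tree w \<in> finite_subtrees (reduced_words r)"
    using w(1) by (rule munn_tree_in_finite_subtrees)
  then have "wag w (traversal r (munn_tree w))"
    using traversal[OF T] rw by (intro wag_if_munn_tree_eq) auto
  then have "fim_elem r (traversal r (munn_tree w)) = c"
    using fim_elem_eq_iff_wag w by (metis fim_elem_def mem_Collect_eq wag_sym wag_trans)
  moreover have "2 * (card (munn_tree w) - 1) = K" using c fim_length_idem[OF w(1) rw] w(2) by simp
  ultimately show "c \<in> (\<lambda>T. fim_elem r (traversal r T)) `
      {T \<in> finite_subtrees (reduced_words r). 2 * (card T - 1) = K}"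
    using T by force
next
  fix c assume "c \<in> (\<lambda>T. fim_elem r (traversal r T)) `
      {T \<in> finite_subtrees (reduced_words r). 2 * (card T - 1) = K}"
  then obtain T where T: "T \<in> finite_subtrees (reduced_words r)" "2 * (card T - 1) = K"
    "c = fim_elem r (traversal r T)" by auto
  note t = traversal[OF T(1)]
  show "c \<in> {c \<in> FIM r. fim_length c = K \<and> fim_idem r c}"
    using T t fim_length_idem[of "traversal r T" r] fim_elem_square_eq_iff[of "traversal r T" r]
    by (auto simp: FIM_def fim_idem_def)
qed

lemma idem_count_eq_card_subtrees:
  "idem_count r K = card {T \<in> finite_subtrees (reduced_words r). 2 * (card T - 1) = K}"
proof -
  have inj: "inj_on (\<lambda>T. fim_elem r (traversal r T)) (finite_subtrees (reduced_words r))"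
  proof (rule inj_onI)
    fix T T' assume T: "T \<in> finite_subtrees (reduced_words r)" "T' \<in> finite_subtrees (reduced_words r)"
      and eq: "fim_elem r (traversal r T) = fim_elem r (traversal r T')"
    then have "wag (traversal r T) (traversal r T')"
      using fim_elem_eq_iff_wag traversal(1)[OF T(1)] by blast
    then have "munn_tree (traversal r T) = munn_tree (traversal r T')" using wag_invariants by blast
    then show "T = T'" using traversal(3)[OF T(1)] traversal(3)[OF T(2)] by simp
  qed
  show ?thesis unfolding idem_count_def idempotents_eq_image_traversal
    by (rule card_image[OF inj_on_subset[OF inj]]) blast
qed

lemma idem_count_even:
  "idem_count r (2 * k) = card {T \<in> finite_subtrees (reduced_words r). card T = Suc k}"
proof -
  have "card T \<noteq> 0" if "T \<in> finite_subtrees (reduced_words r)" for T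
    using that by (auto simp: finite_subtrees_def)
  then have "{T \<in> finite_subtrees (reduced_words r). 2 * (card T - 1) = 2 * k}
      = {T \<in> finite_subtrees (reduced_words r). card T = Suc k}"
    by force
  then show ?thesis by (simp add: idem_count_eq_card_subtrees)
qed

lemma idem_count_odd: "idem_count r (Suc (2 * k)) = 0"
proof -
  have "2 * n \<noteq> Suc (2 * k)" for n by presburger
  then show ?thesis by (simp add: idem_count_eq_card_subtrees)
qed


subsection \<open>Coding reduced words by sequences of indices\<close>

definition valid_code :: "nat \<Rightarrow> nat \<Rightarrow> nat list \<Rightarrow> bool" where
  "valid_code j m p \<longleftrightarrow> (\<forall>k<length p. p ! k < (if k = 0 then j else m))"

text \<open>The vertices of the rooted tree in which the root has j children and every other
  vertex m children.\<close>

definition codes :: "nat \<Rightarrow> nat \<Rightarrow> nat list set" where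
  "codes j m = {p. valid_code j m p}"

lemma valid_code_snoc: "valid_code j m (p @ [i]) \<longleftrightarrow> valid_code j m p \<and> i < (if p = [] then j else m)"
  by (auto simp: valid_code_def nth_append less_Suc_eq)

lemma valid_code_take: "valid_code j m p \<Longrightarrow> valid_code j m (take k p)"
  by (simp add: valid_code_def)

lemma valid_code_Cons: "valid_code j m (i # p) \<longleftrightarrow> i < j \<and> valid_code m m p"
  by (auto simp: valid_code_def nth_Cons' less_Suc_eq_0_disj)

definition letter_list :: "nat \<Rightarrow> letter list" where
  "letter_list r = concat (map (\<lambda>i. [(i, False), (i, True)]) [0..<r])"

lemma set_letter_list: "set (letter_list r) = {l. fst l < r}"
  by (auto simp: letter_list_def)

lemma distinct_letter_list: "distinct (letter_list r)"
proof (induction r)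
  case (Suc r)
  have "letter_list (Suc r) = letter_list r @ [(r, False), (r, True)]" by (simp add: letter_list_def)
  then show ?case using Suc set_letter_list[of r] by auto
qed (simp add: letter_list_def)

lemma card_set_letter_list: "card (set (letter_list r)) = 2 * r"
proof -
  have "length (letter_list r) = 2 * r" by (induction r) (simp_all add: letter_list_def)
  then show ?thesis using distinct_card[OF distinct_letter_list] by simp
qed

definition next_letters :: "nat \<Rightarrow> letter list \<Rightarrow> letter list" where
  "next_letters r w = filter (\<lambda>y. w = [] \<or> y \<noteq> inv_letter (last w)) (letter_list r)"

text \<open>The i-th index of a code chooses among the letters that do not cancel the previous one.\<close>

definition decode :: "nat \<Rightarrow> nat list \<Rightarrow> letter list" where
  "decode r p = foldl (\<lambda>w i. w @ [next_letters r w ! i]) [] p"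

lemma set_next_letters: "set (next_letters r w) = {y. fst y < r \<and> (w = [] \<or> y \<noteq> inv_letter (last w))}"
  by (auto simp: next_letters_def set_letter_list)

lemma length_next_letters:
  assumes "w \<in> words r"
  shows "length (next_letters r w) = (if w = [] then 2 * r else 2 * r - 1)"
proof -
  have "length (next_letters r w) = card (set (next_letters r w))"
    by (simp add: next_letters_def distinct_card[symmetric] distinct_letter_list)
  also have "set (next_letters r w)
      = (if w = [] then set (letter_list r) else set (letter_list r) - {inv_letter (last w)})"
    by (auto simp: set_next_letters set_letter_list)
  also have "card \<dots> = (if w = [] then 2 * r else 2 * r - 1)"
  proof (cases "w = []")
    case False
    then have "inv_letter (last w) \<in> set (letter_list r)"
      using assms by (simp add: set_letter_list words_def)
    then show ?thesis using False by (simp add: card_Diff_singleton card_set_letter_list)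
  qed (simp add: card_set_letter_list)
  finally show ?thesis .
qed

lemma decode_Nil [simp]: "decode r [] = []"
  by (simp add: decode_def)

lemma decode_snoc: "decode r (p @ [i]) = decode r p @ [next_letters r (decode r p) ! i]"
  by (simp add: decode_def)

lemma length_decode [simp]: "length (decode r p) = length p"
  by (induction p rule: rev_induct) (simp_all add: decode_snoc)

lemma decode_eq_Nil_iff [simp]: "decode r p = [] \<longleftrightarrow> p = []"
  using length_decode[of r p] by (metis length_0_conv)

lemma take_decode: "take k (decode r p) = decode r (take k p)"
proof (induction p rule: rev_induct)
  case (snoc i p)
  then show ?case by (cases "k \<le> length p") (simp_all add: decode_snoc)
qed simp

context
  fixes r :: nat
  assumes r: "r \<ge> 1"
begin

lemma decode_in_reduced_words:
  "valid_code (2 * r) (2 * r - 1) p \<Longrightarrow> decode r p \<in> reduced_words r"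
proof (induction p rule: rev_induct)
  case (snoc i p)
  then have p: "decode r p \<in> reduced_words r" and i: "i < (if p = [] then 2 * r else 2 * r - 1)"
    by (auto simp: valid_code_snoc)
  then have "i < length (next_letters r (decode r p))"
    by (subst length_next_letters) (auto simp: reduced_words_def)
  then have "next_letters r (decode r p) ! i \<in> set (next_letters r (decode r p))" by simp
  then show ?case using p by (auto simp: decode_snoc set_next_letters reduced_words_def words_def reduced_snoc)
qed (simp add: reduced_words_def words_def)

lemma length_next_letters_decode:
  "valid_code (2 * r) (2 * r - 1) p \<Longrightarrow>
    length (next_letters r (decode r p)) = (if p = [] then 2 * r else 2 * r - 1)"
  using decode_in_reduced_words[of p] by (subst length_next_letters) (auto simp: reduced_words_def)

lemma inj_on_decode: "inj_on (decode r) (codes (2 * r) (2 * r - 1))"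
proof (rule inj_onI)
  fix p q assume "p \<in> codes (2 * r) (2 * r - 1)" "q \<in> codes (2 * r) (2 * r - 1)" "decode r p = decode r q"
  then show "p = q"
  proof (induction p arbitrary: q rule: rev_induct)
    case (snoc i p)
    obtain q' i' where q: "q = q' @ [i']"
      using snoc.prems(3) by (cases q rule: rev_cases) auto
    have c: "valid_code (2 * r) (2 * r - 1) p" "valid_code (2 * r) (2 * r - 1) q'"
      and ii: "i < (if p = [] then 2 * r else 2 * r - 1)" "i' < (if q' = [] then 2 * r else 2 * r - 1)"
      using snoc.prems q by (auto simp: codes_def valid_code_snoc)
    have "p = q'" using snoc.IH c snoc.prems(3) q by (auto simp: codes_def decode_snoc)
    moreover have "next_letters r (decode r p) ! i = next_letters r (decode r p) ! i'"
      using snoc.prems(3) q \<open>p = q'\<close> by (simp add: decode_snoc)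
    moreover have "distinct (next_letters r (decode r p))"
      by (simp add: next_letters_def distinct_letter_list)
    ultimately have "i = i'"
      using ii length_next_letters_decode[OF c(1)] by (simp add: nth_eq_iff_index_eq)
    then show ?case using q \<open>p = q'\<close> by simp
  qed (simp add: eq_commute[of "[]"])
qed

lemma decode_image: "decode r ` codes (2 * r) (2 * r - 1) = reduced_words r"
proof (intro equalityI subsetI)
  fix w assume "w \<in> reduced_words r"
  then show "w \<in> decode r ` codes (2 * r) (2 * r - 1)"
  proof (induction w rule: rev_induct)
    case (snoc x w)
    then have w: "w \<in> reduced_words r" and x: "fst x < r" "w \<noteq> [] \<longrightarrow> x \<noteq> inv_letter (last w)"
      by (auto simp: reduced_words_def words_def reduced_snoc)
    obtain p where p: "valid_code (2 * r) (2 * r - 1) p" "decode r p = w"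
      using snoc.IH w by (auto simp: codes_def)
    have "x \<in> set (next_letters r w)" using x by (auto simp: set_next_letters)
    then obtain i where i: "i < length (next_letters r w)" "next_letters r w ! i = x"
      by (auto simp: in_set_conv_nth)
    then have "valid_code (2 * r) (2 * r - 1) (p @ [i])"
      using p length_next_letters_decode[OF p(1)] by (auto simp: valid_code_snoc)
    moreover have "decode r (p @ [i]) = w @ [x]" using p i by (simp add: decode_snoc)
    ultimately show ?case unfolding codes_def by (intro image_eqI[of _ _ "p @ [i]"]) simp_all
  qed (intro image_eqI[of _ _ "[]"], simp_all add: codes_def valid_code_def)
qed (auto simp: codes_def decode_in_reduced_words)

end

lemma image_in_finite_subtrees:
  assumes S: "S \<in> finite_subtrees A" and fA: "f ` A \<subseteq> B"
    and take_f: "\<And>p k. p \<in> A \<Longrightarrow> take k (f p) = f (take k p)" and f_Nil: "f [] = []"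
  shows "f ` S \<in> finite_subtrees B"
proof -
  have S_sub: "S \<subseteq> A" and pc: "prefix_closed S" and "finite S" "[] \<in> S"
    using S by (simp_all add: finite_subtrees_def)
  have "take k q \<in> f ` S" if "q \<in> f ` S" for q k
  proof -
    obtain p where p: "p \<in> S" "q = f p" using \<open>q \<in> f ` S\<close> by blast
    then have "take k p \<in> S" using pc by (simp add: prefix_closed_def)
    moreover have "take k q = f (take k p)" using p S_sub take_f by blast
    ultimately show ?thesis by blast
  qed
  then have "prefix_closed (f ` S)" by (simp add: prefix_closed_def)
  moreover have "[] \<in> f ` S" using \<open>[] \<in> S\<close> f_Nil by (metis imageI)
  moreover have "f ` S \<subseteq> B" using S_sub fA by blast
  ultimately show ?thesis using \<open>finite S\<close> by (simp add: finite_subtrees_def)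
qed

lemma finite_subtrees_preimage:
  assumes T: "T \<in> finite_subtrees (f ` A)" and inj: "inj_on f A"
    and take_f: "\<And>p k. p \<in> A \<Longrightarrow> take k (f p) = f (take k p)"
    and A: "\<And>p k. p \<in> A \<Longrightarrow> take k p \<in> A" and f_Nil: "f [] = []"
  shows "\<exists>S \<in> finite_subtrees A. T = f ` S"
proof -
  have T_sub: "T \<subseteq> f ` A" and pc: "prefix_closed T" and "finite T" "[] \<in> T"
    using T by (simp_all add: finite_subtrees_def)
  define S where "S = {p \<in> A. f p \<in> T}"
  have fS: "f ` S = T" using T_sub unfolding S_def by blast
  have injS: "inj_on f S" using inj by (rule inj_on_subset) (auto simp: S_def)
  have "finite S" using \<open>finite T\<close> fS finite_imageD[OF _ injS] by simp
  moreover obtain p where "p \<in> A" using \<open>[] \<in> T\<close> T_sub by blast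
  then have "[] \<in> A" using A[of p 0] by simp
  then have "[] \<in> S" using \<open>[] \<in> T\<close> f_Nil by (simp add: S_def)
  moreover have "take k p \<in> S" if "p \<in> S" for p k
  proof -
    from that have p: "p \<in> A" "f p \<in> T" by (simp_all add: S_def)
    then have "take k (f p) \<in> T" using pc by (simp add: prefix_closed_def)
    then have "f (take k p) \<in> T" using take_f[OF p(1)] by simp
    then show ?thesis using A[OF p(1)] by (simp add: S_def)
  qed
  then have "prefix_closed S" by (simp add: prefix_closed_def)
  moreover have "S \<subseteq> A" by (simp add: S_def)
  ultimately show ?thesis using fS by (auto simp: finite_subtrees_def)
qed

lemma card_finite_subtrees_bij_betw:
  assumes f: "bij_betw f A B" and take_f: "\<And>p k. p \<in> A \<Longrightarrow> take k (f p) = f (take k p)"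
    and A: "\<And>p k. p \<in> A \<Longrightarrow> take k p \<in> A" and f_Nil: "f [] = []"
  shows "card {T \<in> finite_subtrees B. card T = n} = card {S \<in> finite_subtrees A. card S = n}"
proof -
  have inj: "inj_on f A" and fA: "f ` A = B" using f by (auto simp: bij_betw_def)
  have card_image_subtree: "card (f ` S) = card S" if "S \<in> finite_subtrees A" for S
    using that card_image inj_on_subset[OF inj] by (auto simp: finite_subtrees_def)
  have "bij_betw (image f) {S \<in> finite_subtrees A. card S = n} {T \<in> finite_subtrees B. card T = n}"
  proof (rule bij_betw_imageI)
    show "inj_on (image f) {S \<in> finite_subtrees A. card S = n}"
      by (rule inj_on_subset[OF inj_on_image_Pow[OF inj]]) (auto simp: finite_subtrees_def)
    show "image f ` {S \<in> finite_subtrees A. card S = n} = {T \<in> finite_subtrees B. card T = n}"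
    proof (intro equalityI subsetI)
      fix T assume "T \<in> image f ` {S \<in> finite_subtrees A. card S = n}"
      then show "T \<in> {T \<in> finite_subtrees B. card T = n}"
        using image_in_finite_subtrees[OF _ _ take_f f_Nil] fA card_image_subtree by auto
    next
      fix T assume T: "T \<in> {T \<in> finite_subtrees B. card T = n}"
      then obtain S where "S \<in> finite_subtrees A" "T = f ` S"
        using finite_subtrees_preimage[OF _ inj take_f A f_Nil] fA by blast
      then show "T \<in> image f ` {S \<in> finite_subtrees A. card S = n}" using T card_image_subtree by auto
    qed
  qed
  then show ?thesis by (simp add: bij_betw_same_card)
qed

lemma idem_count_eq_subtree_count:
  assumes "r \<ge> 1"
  shows "idem_count r (2 * k) = card {S \<in> finite_subtrees (codes (2 * r) (2 * r - 1)). card S = Suc k}"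
  unfolding idem_count_even
  by (rule card_finite_subtrees_bij_betw[OF bij_betw_imageI[OF inj_on_decode decode_image, OF assms assms]])
    (auto simp: take_decode codes_def valid_code_take)


subsection \<open>Counting rooted subtrees\<close>

definition subtree_count :: "nat \<Rightarrow> nat \<Rightarrow> nat \<Rightarrow> nat" where
  "subtree_count j m n = card {S \<in> finite_subtrees (codes j m). card S = n}"

definition subtrees_below :: "nat \<Rightarrow> nat \<Rightarrow> nat \<Rightarrow> nat list set set" where
  "subtrees_below j m D = {S \<in> finite_subtrees (codes j m). \<forall>p\<in>S. length p < D}"

definition graft :: "nat \<Rightarrow> (nat \<Rightarrow> nat list set) \<Rightarrow> nat list set" where
  "graft j F = insert [] (\<Union>i<j. (#) i ` F i)"

definition branch :: "nat list set \<Rightarrow> nat \<Rightarrow> nat list set" where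
  "branch S i = {p. i # p \<in> S}"

lemma subtrees_below_0 [simp]: "subtrees_below j m 0 = {}"
  by (auto simp: subtrees_below_def finite_subtrees_def)

lemma empty_notin_subtrees_below [simp]: "{} \<notin> subtrees_below j m D"
  by (auto simp: subtrees_below_def finite_subtrees_def)

lemma branch_graft: "i < j \<Longrightarrow> branch (graft j F) i = F i"
  by (auto simp: graft_def branch_def)

lemma branch_in_subtrees_below:
  assumes S: "S \<in> subtrees_below j m (Suc D)"
  shows "branch S i \<in> insert {} (subtrees_below m m D)"
proof (cases "branch S i = {}")
  case False
  then obtain p where p: "i # p \<in> S" by (auto simp: branch_def)
  have S': "finite S" "prefix_closed S" "S \<subseteq> codes j m" "\<forall>p\<in>S. length p < Suc D"
    using S by (auto simp: subtrees_below_def finite_subtrees_def)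
  have "finite (branch S i)"
    using finite_vimageI[OF S'(1), of "Cons i"] by (simp add: branch_def vimage_def)
  moreover have "take 1 (i # p) \<in> S" using S'(2) p unfolding prefix_closed_def by blast
  then have "[] \<in> branch S i" by (simp add: branch_def)
  moreover have "take k q \<in> branch S i" if "q \<in> branch S i" for q k
  proof -
    have "take (Suc k) (i # q) \<in> S" using that S'(2) unfolding prefix_closed_def branch_def by blast
    then show ?thesis by (simp add: branch_def)
  qed
  then have "prefix_closed (branch S i)" by (simp add: prefix_closed_def)
  moreover have "branch S i \<subseteq> codes m m" "\<forall>p\<in>branch S i. length p < D"
    using S'(3,4) by (auto simp: branch_def codes_def valid_code_Cons)
  ultimately show ?thesis by (simp add: subtrees_below_def finite_subtrees_def)
qed simp

lemma graft_branch:
  assumes "S \<in> finite_subtrees (codes j m)"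
  shows "graft j (branch S) = S"
proof (intro equalityI subsetI)
  fix p assume p: "p \<in> S"
  show "p \<in> graft j (branch S)"
  proof (cases p)
    case (Cons i q)
    then have "i < j" using assms p by (auto simp: finite_subtrees_def codes_def valid_code_Cons)
    then show ?thesis using p Cons by (auto simp: graft_def branch_def)
  qed (simp add: graft_def)
qed (use assms in \<open>auto simp: graft_def branch_def finite_subtrees_def\<close>)

lemma graft_in_subtrees_below:
  assumes F: "\<And>i. i < j \<Longrightarrow> F i \<in> insert {} (subtrees_below m m D)"
  shows "graft j F \<in> subtrees_below j m (Suc D)"
proof -
  have Fi: "finite (F i)" "prefix_closed (F i)" "F i \<subseteq> codes m m" "\<forall>p\<in>F i. length p < D"
    if "i < j" for i
    using F[OF that] by (auto simp: subtrees_below_def finite_subtrees_def prefix_closed_def)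
  have "take k p \<in> graft j F" if "p \<in> graft j F" for p k
  proof (cases p)
    case (Cons i q)
    then have "i < j" "q \<in> F i" using that by (auto simp: graft_def)
    then have "take (k - 1) q \<in> F i" using Fi(2) by (simp add: prefix_closed_def)
    then show ?thesis using Cons \<open>i < j\<close> by (cases k) (auto simp: graft_def)
  qed (simp add: graft_def)
  then have "prefix_closed (graft j F)" by (simp add: prefix_closed_def)
  moreover have "finite (graft j F)" using Fi(1) by (simp add: graft_def)
  moreover have "graft j F \<subseteq> codes j m"
  proof
    fix p assume "p \<in> graft j F"
    then consider "p = []" | i q where "i < j" "q \<in> F i" "p = i # q" by (auto simp: graft_def)
    then show "p \<in> codes j m"
      by cases (use Fi(3) in \<open>auto simp: codes_def valid_code_Cons valid_code_def[of j m "[]"]\<close>)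
  qed
  moreover have "\<forall>p\<in>graft j F. length p < Suc D" using Fi(4) by (auto simp: graft_def)
  ultimately show ?thesis by (simp add: subtrees_below_def finite_subtrees_def graft_def)
qed

lemma subtrees_below_Suc:
  "subtrees_below j m (Suc D) = graft j ` PiE {..<j} (\<lambda>_. insert {} (subtrees_below m m D))"
proof (intro equalityI subsetI)
  fix S assume S: "S \<in> subtrees_below j m (Suc D)"
  have "graft j (restrict (branch S) {..<j}) = graft j (branch S)" by (simp add: graft_def)
  also have "\<dots> = S" using S graft_branch[of S j m] by (simp add: subtrees_below_def)
  finally show "S \<in> graft j ` PiE {..<j} (\<lambda>_. insert {} (subtrees_below m m D))"
    using branch_in_subtrees_below[OF S] by (intro image_eqI[of _ _ "restrict (branch S) {..<j}"]) auto
next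
  fix S assume "S \<in> graft j ` PiE {..<j} (\<lambda>_. insert {} (subtrees_below m m D))"
  then obtain F where "F \<in> PiE {..<j} (\<lambda>_. insert {} (subtrees_below m m D))" "S = graft j F" by blast
  then show "S \<in> subtrees_below j m (Suc D)" by (auto intro: graft_in_subtrees_below)
qed

lemma inj_on_graft: "inj_on (graft j) (PiE {..<j} B)"
proof (rule inj_onI)
  fix F G assume F: "F \<in> PiE {..<j} B" and G: "G \<in> PiE {..<j} B" and eq: "graft j F = graft j G"
  show "F = G"
  proof (rule PiE_ext[OF F G])
    fix i assume "i \<in> {..<j}"
    then show "F i = G i" using eq branch_graft[of i j] by (metis lessThan_iff)
  qed
qed

lemma card_graft:
  assumes "\<And>i. i < j \<Longrightarrow> finite (F i)"
  shows "card (graft j F) = Suc (\<Sum>i<j. card (F i))"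
proof -
  have "card (\<Union>i<j. (#) i ` F i) = (\<Sum>i<j. card ((#) i ` F i))"
    using assms by (intro card_UN_disjoint) auto
  also have "\<dots> = (\<Sum>i<j. card (F i))" by (simp add: card_image)
  finally show ?thesis unfolding graft_def using assms by (subst card_insert_disjoint) auto
qed

lemma finite_subtrees_below: "finite (subtrees_below j m D)"
proof (induction D arbitrary: j)
  case (Suc D)
  show ?case unfolding subtrees_below_Suc using Suc[of m] by (intro finite_imageI finite_PiE) auto
qed simp

lemma sum_subtrees_below_Suc:
  fixes x :: real
  shows "(\<Sum>S\<in>subtrees_below j m (Suc D). x ^ card S)
    = x * (1 + (\<Sum>S\<in>subtrees_below m m D. x ^ card S)) ^ j"
proof -
  let ?B = "insert {} (subtrees_below m m D)"
  have fin: "finite T" if "T \<in> ?B" for T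
    using that by (auto simp: subtrees_below_def finite_subtrees_def)
  have "(\<Sum>S\<in>subtrees_below j m (Suc D). x ^ card S) = (\<Sum>F\<in>PiE {..<j} (\<lambda>_. ?B). x ^ card (graft j F))"
    unfolding subtrees_below_Suc by (rule sum.reindex[OF inj_on_graft, unfolded comp_def])
  also have "\<dots> = (\<Sum>F\<in>PiE {..<j} (\<lambda>_. ?B). x * (\<Prod>i<j. x ^ card (F i)))"
  proof (rule sum.cong[OF refl])
    fix F assume "F \<in> PiE {..<j} (\<lambda>_. ?B)"
    then have "card (graft j F) = Suc (\<Sum>i<j. card (F i))" using fin by (intro card_graft) auto
    then show "x ^ card (graft j F) = x * (\<Prod>i<j. x ^ card (F i))" by (simp add: power_sum)
  qed
  also have "\<dots> = x * (\<Prod>i<j. \<Sum>T\<in>?B. x ^ card T)"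
  proof -
    have "(\<Prod>i<j. \<Sum>T\<in>?B. x ^ card T) = (\<Sum>F\<in>PiE {..<j} (\<lambda>_. ?B). \<Prod>i<j. x ^ card (F i))"
      by (rule prod_sum_PiE) (auto simp: finite_subtrees_below)
    then show ?thesis by (simp add: sum_distrib_left)
  qed
  also have "(\<Sum>T\<in>?B. x ^ card T) = 1 + (\<Sum>S\<in>subtrees_below m m D. x ^ card S)"
    by (simp add: finite_subtrees_below)
  finally show ?thesis by simp
qed

lemma length_lt_card:
  assumes S: "S \<in> finite_subtrees A" "p \<in> S"
  shows "length p < card S"
proof -
  have "inj_on (\<lambda>k. take k p) {0..length p}"
    by (rule inj_onI) (metis atLeastAtMost_iff length_take min.absorb2)
  then have "card ((\<lambda>k. take k p) ` {0..length p}) = Suc (length p)" by (simp add: card_image)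
  moreover have "card ((\<lambda>k. take k p) ` {0..length p}) \<le> card S"
    using S by (intro card_mono) (auto simp: finite_subtrees_def prefix_closed_def)
  ultimately show ?thesis by simp
qed

lemma subtrees_card_subset_below:
  "{S \<in> finite_subtrees (codes j m). card S = n} \<subseteq> subtrees_below j m n"
  using length_lt_card by (auto simp: subtrees_below_def)

lemma finite_subtrees_card: "finite {S \<in> finite_subtrees (codes j m). card S = n}"
  using finite_subset[OF subtrees_card_subset_below finite_subtrees_below] .

lemma card_subtree_pos: "S \<in> finite_subtrees A \<Longrightarrow> card S \<ge> 1"
  by (auto simp: finite_subtrees_def Suc_le_eq card_gt_0_iff)

lemma subtree_count_pos:
  assumes "m \<ge> 1" "n \<ge> 1"
  shows "subtree_count m m n \<ge> 1"
proof -
  define S where "S = (\<lambda>k. replicate k (0::nat)) ` {..<n}"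
  have "S \<in> finite_subtrees (codes m m)"
    using assms by (auto simp: S_def finite_subtrees_def prefix_closed_def codes_def valid_code_def
        min_def intro!: image_eqI)
  moreover have "card S = n" unfolding S_def by (subst card_image) (auto intro: inj_onI)
  ultimately have "card {S \<in> finite_subtrees (codes m m). card S = n} \<noteq> 0"
    using finite_subtrees_card by (auto simp: card_eq_0_iff)
  then show ?thesis by (simp add: subtree_count_def)
qed

text \<open>Grafting two subtrees onto the first two children of a new root.\<close>

lemma subtree_count_supermult:
  assumes m: "m \<ge> 2"
  shows "subtree_count m m p * subtree_count m m q \<le> subtree_count m m (p + q + 1)"
proof -
  define F :: "nat list set \<Rightarrow> nat list set \<Rightarrow> nat \<Rightarrow> nat list set"
    where "F S1 S2 = (\<lambda>i\<in>{..<m}. if i = 0 then S1 else if i = 1 then S2 else {})" for S1 S2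
  define g where "g = (\<lambda>(S1, S2). graft m (F S1 S2))"
  let ?level = "\<lambda>n. {S \<in> finite_subtrees (codes m m). card S = n}"
  have branches: "branch (g (S1, S2)) 0 = S1" "branch (g (S1, S2)) 1 = S2" for S1 S2
    using m by (simp_all add: g_def F_def branch_graft)
  have "inj_on g (?level p \<times> ?level q)"
    by (rule inj_onI) (metis branches prod.collapse)
  moreover have "g (S1, S2) \<in> ?level (p + q + 1)" if S: "S1 \<in> ?level p" "S2 \<in> ?level q" for S1 S2
  proof -
    have "S1 \<in> subtrees_below m m (max p q)" "S2 \<in> subtrees_below m m (max p q)"
      using S subtrees_card_subset_below[of m m] by (force simp: subtrees_below_def)+
    then have "F S1 S2 i \<in> insert {} (subtrees_below m m (max p q))" if "i < m" for i
      using that by (simp add: F_def)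
    then have "g (S1, S2) \<in> subtrees_below m m (Suc (max p q))"
      unfolding g_def by (simp add: graft_in_subtrees_below)
    moreover have "finite (F S1 S2 i)" if "i < m" for i using S that by (auto simp: F_def finite_subtrees_def)
    then have "card (g (S1, S2)) = Suc (\<Sum>i<m. card (F S1 S2 i))" by (simp add: g_def card_graft)
    moreover have "(\<Sum>i<m. card (F S1 S2 i)) = (\<Sum>i\<in>{0, 1}. card (F S1 S2 i))"
      using m by (intro sum.mono_neutral_right) (auto simp: F_def)
    ultimately show ?thesis using S m by (simp add: F_def subtrees_below_def)
  qed
  then have "g ` (?level p \<times> ?level q) \<subseteq> ?level (p + q + 1)" by auto
  ultimately have "card (?level p \<times> ?level q) \<le> card (?level (p + q + 1))"
    by (rule card_inj_on_le[OF _ _ finite_subtrees_card])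
  then show ?thesis by (simp add: subtree_count_def card_cartesian_product)
qed

lemma subtree_count_mono: "subtree_count m m n \<le> subtree_count (Suc m) m n"
proof -
  have "codes m m \<subseteq> codes (Suc m) m" by (auto simp: codes_def valid_code_def less_Suc_eq)
  then have "{S \<in> finite_subtrees (codes m m). card S = n} \<subseteq> {S \<in> finite_subtrees (codes (Suc m) m). card S = n}"
    by (auto simp: finite_subtrees_def)
  then show ?thesis unfolding subtree_count_def by (intro card_mono finite_subtrees_card)
qed


subsection \<open>Exponential growth of the number of rooted subtrees\<close>

text \<open>The radius of convergence of the generating function g = x (1 + g)^m of rooted
  subtrees of the m-ary tree; there g = 1 / (m - 1).\<close>

definition gf_radius :: "nat \<Rightarrow> real" where
  "gf_radius m = real (m - 1) ^ (m - 1) / real m ^ m"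

lemma eventually_root_less:
  fixes u :: "nat \<Rightarrow> real"
  assumes u: "\<And>n. 0 \<le> u n" "\<And>n. u n \<le> C * L ^ n" and L: "0 < L" "L < a" and C: "0 < C"
  shows "eventually (\<lambda>n. u n powr (1 / real n) < a) sequentially"
proof -
  have "(\<lambda>n. C powr (1 / real n) * L) \<longlonglongrightarrow> C powr 0 * L"
    by (intro tendsto_intros) (use C in auto)
  then have "eventually (\<lambda>n. C powr (1 / real n) * L < a) sequentially"
    using C L by (intro order_tendstoD) simp_all
  with eventually_gt_at_top[of 0] show ?thesis
  proof eventually_elim
    case (elim n)
    have "u n powr (1 / real n) \<le> (C * L ^ n) powr (1 / real n)"
      using u by (intro powr_mono2) auto
    also have "\<dots> = C powr (1 / real n) * L"
      using C L elim(1) by (simp add: powr_mult powr_realpow[symmetric] powr_powr)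
    finally show ?case using elim(2) by simp
  qed
qed

lemma supermult_power_le:
  fixes f :: "nat \<Rightarrow> nat"
  assumes supermult: "\<And>p q. p \<ge> 1 \<Longrightarrow> q \<ge> 1 \<Longrightarrow> f p * f q \<le> f (p + q + 1)"
    and pos: "\<And>n. n \<ge> 1 \<Longrightarrow> f n \<ge> 1" and p: "p \<ge> 1" and s: "s \<ge> 1"
  shows "f p ^ t \<le> f (t * (p + 1) + s)"
proof (induction t)
  case (Suc t)
  have "f p ^ Suc t \<le> f p * f (t * (p + 1) + s)" using Suc by simp
  also have "\<dots> \<le> f (p + (t * (p + 1) + s) + 1)" using s by (intro supermult p) simp
  also have "p + (t * (p + 1) + s) + 1 = Suc t * (p + 1) + s" by simp
  finally show ?case .
qed (use pos s in simp)

text \<open>A Fekete-type argument: writing N = t (p + 1) + s, the N-th root of f(N) is at least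
  f(p)^(t/N), and t/N tends to 1/(p + 1).\<close>

lemma eventually_root_greater_of_supermult:
  fixes f :: "nat \<Rightarrow> nat"
  assumes supermult: "\<And>p q. p \<ge> 1 \<Longrightarrow> q \<ge> 1 \<Longrightarrow> f p * f q \<le> f (p + q + 1)"
    and pos: "\<And>n. n \<ge> 1 \<Longrightarrow> f n \<ge> 1"
    and p: "p \<ge> 1" and c: "c < real (f p) powr (1 / real (p + 1))"
  shows "eventually (\<lambda>N. c < real (f N) powr (1 / real N)) sequentially"
proof -
  define q where "q = p + 1"
  define A where "A = real (f p)"
  define \<beta> where "\<beta> = A powr (1 / real q)"
  have A1: "A \<ge> 1" using pos[OF p] by (simp add: A_def)
  have "(\<lambda>N. \<beta> powr (1 - real q * (1 / real N))) \<longlonglongrightarrow> \<beta> powr (1 - real q * 0)"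
    using A1 by (intro tendsto_intros) (auto simp: \<beta>_def)
  then have "eventually (\<lambda>N. c < \<beta> powr (1 - real q * (1 / real N))) sequentially"
    using c by (intro order_tendstoD) (simp_all add: \<beta>_def A_def q_def)
  with eventually_ge_at_top[of q] show ?thesis
  proof eventually_elim
    case (elim N)
    define t where "t = (N - 1) div q"
    have N0: "N > 0" using elim(1) by (simp add: q_def)
    have N_eq: "N = t * q + ((N - 1) mod q + 1)" using N0 by (simp add: t_def)
    have "(N - 1) mod q < q" by (simp add: q_def)
    then have "N \<le> t * q + q" using N_eq by linarith
    then have "real N \<le> real (t * q + q)" by (simp only: of_nat_le_iff)
    then have "real N \<le> real q + real q * real t" by (simp add: algebra_simps)
    then have "real N * real N \<le> real N * (real q + real q * real t)"
      by (intro mult_left_mono) simp_all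
    moreover have "real q > 0" by (simp add: q_def)
    ultimately have exponent: "(1 / real q) * (1 - real q * (1 / real N)) \<le> real t / real N"
      using N0 by (simp add: field_simps)
    have "\<beta> powr (1 - real q * (1 / real N)) = A powr ((1 / real q) * (1 - real q * (1 / real N)))"
      by (simp add: \<beta>_def powr_powr)
    also have "\<dots> \<le> A powr (real t / real N)" using A1 exponent by (intro powr_mono) auto
    also have "\<dots> = (A ^ t) powr (1 / real N)"
      using A1 by (simp add: powr_realpow[symmetric] powr_powr)
    also have "\<dots> \<le> real (f N) powr (1 / real N)"
    proof -
      have "f p ^ t \<le> f N"
        using supermult_power_le[OF supermult pos p, of "(N - 1) mod q + 1" t] N_eq by (simp add: q_def)
      then have "A ^ t \<le> real (f N)" unfolding A_def by (metis of_nat_le_iff of_nat_power)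
      then show ?thesis using A1 by (intro powr_mono2) auto
    qed
    finally show ?case using elim(2) by linarith
  qed
qed

lemma sum_subtrees_below_le_of_count_le:
  fixes x c :: real
  assumes count: "\<And>n. n \<ge> 1 \<Longrightarrow> real (subtree_count m m n) \<le> c ^ (n + 1)"
    and c: "0 < c" and x: "0 < x" "c * x < 1"
  shows "(\<Sum>S\<in>subtrees_below m m D. x ^ card S) \<le> c / (1 - c * x)"
proof -
  let ?P = "subtrees_below m m D"
  have "(\<Sum>S\<in>?P. x ^ card S) = (\<Sum>n\<in>card ` ?P. \<Sum>S\<in>{S \<in> ?P. card S = n}. x ^ card S)"
    by (rule sum.image_gen[OF finite_subtrees_below])
  also have "\<dots> = (\<Sum>n\<in>card ` ?P. real (card {S \<in> ?P. card S = n}) * x ^ n)"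
    by (intro sum.cong refl) simp
  also have "\<dots> \<le> (\<Sum>n\<in>card ` ?P. c * (c * x) ^ n)"
  proof (intro sum_mono)
    fix n assume "n \<in> card ` ?P"
    then have n1: "n \<ge> 1" using card_subtree_pos by (auto simp: subtrees_below_def)
    have "card {S \<in> ?P. card S = n} \<le> subtree_count m m n"
      unfolding subtree_count_def by (intro card_mono finite_subtrees_card) (auto simp: subtrees_below_def)
    then have "real (card {S \<in> ?P. card S = n}) * x ^ n \<le> c ^ (n + 1) * x ^ n"
      using count[OF n1] x by (intro mult_right_mono) auto
    then show "real (card {S \<in> ?P. card S = n}) * x ^ n \<le> c * (c * x) ^ n"
      by (simp add: power_mult_distrib)
  qed
  also have "\<dots> \<le> c / (1 - c * x)"
  proof -
    obtain N where N: "card ` ?P \<subseteq> {..<N}"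
      using finite_nat_bounded[OF finite_imageI[OF finite_subtrees_below]] by blast
    have "(\<Sum>n\<in>card ` ?P. c * (c * x) ^ n) \<le> (\<Sum>n<N. c * (c * x) ^ n)"
      using N c x by (intro sum_mono2) auto
    also have "\<dots> = c * ((1 - (c * x) ^ N) / (1 - c * x))"
      using x by (simp add: sum_distrib_left[symmetric] sum_gp_strict)
    also have "\<dots> \<le> c / (1 - c * x)"
      using c x by (simp add: divide_right_mono)
    finally show ?thesis .
  qed
  finally show ?thesis .
qed

context
  fixes m :: nat
  assumes m2: "m \<ge> 2"
begin

lemma gf_radius_pos: "gf_radius m > 0"
  using m2 by (simp add: gf_radius_def)

lemma gf_radius_lt_1: "gf_radius m < 1"
proof -
  have "(m - 1) ^ (m - 1) \<le> m ^ (m - 1)" by (intro power_mono) auto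
  also have "\<dots> < m ^ m" using m2 by (intro power_strict_increasing) auto
  finally have "real ((m - 1) ^ (m - 1)) < real (m ^ m)" by linarith
  then show ?thesis using m2 by (simp add: gf_radius_def field_simps)
qed

lemma gf_radius_fixpoint: "gf_radius m * (real m / real (m - 1)) ^ m = 1 / real (m - 1)"
proof -
  have "real (m - 1) ^ m = real (m - 1) ^ (m - 1) * real (m - 1)"
    using m2 by (metis Suc_diff_1 less_le_trans pos2 power_Suc2)
  then show ?thesis using m2 by (simp add: gf_radius_def power_divide field_simps)
qed

lemma sum_subtrees_below_at_radius:
  "(\<Sum>S\<in>subtrees_below m m D. gf_radius m ^ card S) \<le> 1 / real (m - 1)"
proof (induction D)
  case (Suc D)
  have "1 + 1 / real (m - 1) = real m / real (m - 1)" using m2 by (simp add: field_simps of_nat_diff)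
  then have "gf_radius m * (1 + (\<Sum>S\<in>subtrees_below m m D. gf_radius m ^ card S)) ^ m \<le> 1 / real (m - 1)"
    using Suc gf_radius_pos gf_radius_fixpoint
    by (metis add_left_mono gf_radius_pos less_imp_le mult_left_mono power_mono sum_nonneg
        zero_le_power add_nonneg_nonneg zero_le_one)
  then show ?case by (simp add: sum_subtrees_below_Suc)
qed simp

lemma subtree_count_le:
  "real (subtree_count j m n) \<le> gf_radius m * (real m / real (m - 1)) ^ j * (1 / gf_radius m) ^ n"
proof (cases n)
  case 0
  then have "{S \<in> finite_subtrees (codes j m). card S = n} = {}"
    using card_subtree_pos[of _ "codes j m"] by fastforce
  then have "subtree_count j m n = 0" unfolding subtree_count_def by (simp only: card.empty)
  then show ?thesis using gf_radius_pos by simp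
next
  case (Suc D)
  let ?x = "gf_radius m"
  have g: "0 \<le> (\<Sum>S\<in>subtrees_below m m D. ?x ^ card S)" using gf_radius_pos by (intro sum_nonneg) simp
  have "real (subtree_count j m n) * ?x ^ n = (\<Sum>S\<in>{S \<in> finite_subtrees (codes j m). card S = n}. ?x ^ card S)"
    by (simp add: subtree_count_def)
  also have "\<dots> \<le> (\<Sum>S\<in>subtrees_below j m n. ?x ^ card S)"
    using gf_radius_pos by (intro sum_mono2 finite_subtrees_below subtrees_card_subset_below) auto
  also have "\<dots> = ?x * (1 + (\<Sum>S\<in>subtrees_below m m D. ?x ^ card S)) ^ j"
    unfolding Suc by (rule sum_subtrees_below_Suc)
  also have "\<dots> \<le> ?x * (real m / real (m - 1)) ^ j"
  proof -
    have "1 + (\<Sum>S\<in>subtrees_below m m D. ?x ^ card S) \<le> real m / real (m - 1)"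
      using sum_subtrees_below_at_radius[of D] m2 by (simp add: field_simps of_nat_diff)
    then show ?thesis using g gf_radius_pos by (intro mult_left_mono power_mono) auto
  qed
  finally have "real (subtree_count j m n) \<le> ?x * (real m / real (m - 1)) ^ j / ?x ^ n"
    using gf_radius_pos by (simp add: pos_le_divide_eq)
  then show ?thesis by (simp add: power_one_over)
qed

text \<open>By Bernoulli's inequality the curve s \<mapsto> x0 (1 + s)^m stays above the diagonal, touching
  it at s = 1 / (m - 1).\<close>

lemma gf_radius_tangent:
  assumes s: "s \<ge> 0"
  shows "s \<le> gf_radius m * (1 + s) ^ m"
proof -
  define t where "t = (1 + s) * real (m - 1) / real m"
  have m1: "real (m - 1) > 0" "real m > 0" using m2 by auto
  have "1 + real m * (t - 1) \<le> (1 + (t - 1)) ^ m"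
    using s m1 by (intro Bernoulli_inequality) (simp add: t_def)
  then have bernoulli: "1 + real m * (t - 1) \<le> t ^ m" by simp
  have "1 + s = t * (real m / real (m - 1))" using m1 by (simp add: t_def field_simps)
  then have "gf_radius m * (1 + s) ^ m = gf_radius m * (t * (real m / real (m - 1))) ^ m" by simp
  also have "\<dots> = t ^ m * (gf_radius m * (real m / real (m - 1)) ^ m)"
    by (simp only: power_mult_distrib) (rule mult.left_commute)
  also have "\<dots> = t ^ m / real (m - 1)" by (subst gf_radius_fixpoint) simp
  finally have e: "gf_radius m * (1 + s) ^ m = t ^ m / real (m - 1)" .
  have "s = (1 + real m * (t - 1)) / real (m - 1)"
    using m1 m2 by (simp add: t_def field_simps of_nat_diff)
  also have "\<dots> \<le> t ^ m / real (m - 1)" using bernoulli m1 by (simp add: divide_right_mono)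
  finally show ?thesis using e by simp
qed

lemma sum_subtrees_below_ge:
  assumes x: "x > gf_radius m"
  shows "real D * (x - gf_radius m) \<le> (\<Sum>S\<in>subtrees_below m m D. x ^ card S)"
proof (induction D)
  case (Suc D)
  define s where "s = (\<Sum>S\<in>subtrees_below m m D. x ^ card S)"
  have s0: "s \<ge> 0" unfolding s_def using x gf_radius_pos by (intro sum_nonneg) simp
  have "x - gf_radius m \<le> (x - gf_radius m) * (1 + s) ^ m" using x s0 by (simp add: one_le_power)
  then have "s + (x - gf_radius m) \<le> x * (1 + s) ^ m"
    using gf_radius_tangent[OF s0] by (simp add: algebra_simps)
  then show ?case using Suc by (simp add: s_def sum_subtrees_below_Suc algebra_simps)
qed simp

lemma exists_subtree_count_gt:
  assumes c: "0 < c" "c < 1 / gf_radius m"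
  shows "\<exists>n\<ge>1. c ^ (n + 1) < real (subtree_count m m n)"
proof (rule ccontr)
  assume "\<not> ?thesis"
  then have count: "\<And>n. n \<ge> 1 \<Longrightarrow> real (subtree_count m m n) \<le> c ^ (n + 1)"
    by (auto simp: not_less)
  define x where "x = (gf_radius m + 1 / c) / 2"
  have cx0: "c * gf_radius m < 1" using c gf_radius_pos by (simp add: field_simps)
  have x: "x > gf_radius m" "c * x < 1"
    using c cx0 by (simp_all add: x_def field_simps)
  have "x > 0" using x(1) gf_radius_pos by linarith
  obtain D where D: "c / (1 - c * x) / (x - gf_radius m) < real D"
    using reals_Archimedean2 by blast
  have "(\<Sum>S\<in>subtrees_below m m D. x ^ card S) \<le> c / (1 - c * x)"
    by (rule sum_subtrees_below_le_of_count_le) (use count c(1) \<open>x > 0\<close> x(2) in auto)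
  then have "real D * (x - gf_radius m) \<le> c / (1 - c * x)"
    using sum_subtrees_below_ge[OF x(1), of D] by linarith
  moreover have "c / (1 - c * x) < real D * (x - gf_radius m)"
    using D x(1) by (simp only: pos_divide_less_eq diff_gt_0_iff_gt)
  ultimately show False by simp
qed

lemma subtree_count_root_tendsto:
  "(\<lambda>N. real (subtree_count (Suc m) m N) powr (1 / real N)) \<longlonglongrightarrow> 1 / gf_radius m"
proof (rule order_tendstoI)
  fix a assume a: "a > 1 / gf_radius m"
  define C where "C = gf_radius m * (real m / real (m - 1)) ^ Suc m"
  have bound: "real (subtree_count (Suc m) m n) \<le> C * (1 / gf_radius m) ^ n" for n
    unfolding C_def by (rule subtree_count_le)
  have "C > 0" using gf_radius_pos m2 by (simp add: C_def)
  then show "eventually (\<lambda>N. real (subtree_count (Suc m) m N) powr (1 / real N) < a) sequentially"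
    using eventually_root_less[OF _ bound _ a] gf_radius_pos by simp
next
  fix a assume a: "a < 1 / gf_radius m"
  define c where "c = max a ((1 + 1 / gf_radius m) / 2)"
  have "(1 + 1 / gf_radius m) / 2 < 1 / gf_radius m"
    using gf_radius_pos gf_radius_lt_1 by (simp add: field_simps)
  moreover have "0 < (1 + 1 / gf_radius m) / 2" using gf_radius_pos by (simp add: add_pos_pos)
  ultimately have c: "0 < c" "c < 1 / gf_radius m" "a \<le> c"
    using a unfolding c_def by (simp_all add: less_max_iff_disj)
  obtain p where p: "p \<ge> 1" "c ^ (p + 1) < real (subtree_count m m p)"
    using exists_subtree_count_gt[OF c(1,2)] by blast
  have "c = (c powr real (p + 1)) powr (1 / real (p + 1))"
    using c(1) by (simp add: powr_powr del: of_nat_Suc)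
  also have "\<dots> = (c ^ (p + 1)) powr (1 / real (p + 1))"
    using c(1) by (simp add: powr_realpow del: of_nat_Suc)
  also have "\<dots> < real (subtree_count m m p) powr (1 / real (p + 1))"
    using p c(1) by (intro powr_less_mono2) auto
  finally have "eventually (\<lambda>N. c < real (subtree_count m m N) powr (1 / real N)) sequentially"
    using subtree_count_supermult[OF m2] subtree_count_pos m2 p(1)
    by (intro eventually_root_greater_of_supermult) auto
  then show "eventually (\<lambda>N. a < real (subtree_count (Suc m) m N) powr (1 / real N)) sequentially"
  proof eventually_elim
    case (elim N)
    have "real (subtree_count m m N) powr (1 / real N) \<le> real (subtree_count (Suc m) m N) powr (1 / real N)"
      using subtree_count_mono by (intro powr_mono2) auto
    then show ?case using elim c(3) by linarith
  qed
qed

end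


subsection \<open>Growth of the idempotents\<close>

lemma idem_growth_eq_sqrt_gf_radius:
  assumes r: "r \<ge> 2"
  shows "idem_growth r = sqrt (1 / gf_radius (2 * r - 1))"
proof -
  define a where "a = 2 * real r - 1"
  define b where "b = 2 * real r - 2"
  have ab: "real (2 * r - 1) = a" "real (2 * r - 1 - 1) = b" "a > 0" "b > 0"
    using r by (auto simp: a_def b_def of_nat_diff)
  have e: "2 * r - 1 - 1 = 2 * (r - 1)" "2 * r - 1 = Suc (2 * (r - 1))" using r by simp_all
  have "1 / gf_radius (2 * r - 1) = a ^ (2 * r - 1) / b ^ (2 * r - 1 - 1)"
    using ab by (simp add: gf_radius_def)
  also have "\<dots> = a * ((a / b) ^ (r - 1))\<^sup>2"
  proof -
    have "(x\<^sup>2) ^ n = (x ^ n)\<^sup>2" for x :: real and n by (metis power_mult mult.commute)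
    then show ?thesis unfolding e(1) e(2) by (simp add: power_mult power_divide)
  qed
  finally have "sqrt (1 / gf_radius (2 * r - 1)) = sqrt a * (a / b) ^ (r - 1)"
    using ab by (simp add: real_sqrt_mult)
  then show ?thesis by (simp add: idem_growth_def a_def b_def)
qed

lemma idem_count_root_tendsto:
  assumes r: "r \<ge> 2"
  shows "(\<lambda>k. real (idem_count r (2 * k)) powr (1 / real (2 * k))) \<longlonglongrightarrow> idem_growth r"
proof -
  define m where "m = 2 * r - 1"
  have m2: "m \<ge> 2" and Sm: "Suc m = 2 * r" using r by (simp_all add: m_def)
  define h where "h n = real (subtree_count (Suc m) m n) powr (1 / real n)" for n
  have count: "idem_count r (2 * k) = subtree_count (Suc m) m (Suc k)" for k
    using idem_count_eq_subtree_count[of r k] r by (simp add: subtree_count_def Sm m_def)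
  have "(\<lambda>k. h (Suc k) powr (1 / 2 + (1 / 2) * (1 / real k))) \<longlonglongrightarrow> (1 / gf_radius m) powr (1 / 2 + (1 / 2) * 0)"
    using LIMSEQ_Suc[OF subtree_count_root_tendsto[OF m2]] gf_radius_pos[OF m2] unfolding h_def
    by (intro tendsto_powr tendsto_intros) auto
  also have "(1 / gf_radius m) powr (1 / 2 + (1 / 2) * 0) = idem_growth r"
    using gf_radius_pos[OF m2] idem_growth_eq_sqrt_gf_radius[OF r] by (simp add: powr_half_sqrt m_def)
  finally show ?thesis
  proof (rule Lim_transform_eventually)
    show "eventually (\<lambda>k. h (Suc k) powr (1 / 2 + (1 / 2) * (1 / real k))
        = real (idem_count r (2 * k)) powr (1 / real (2 * k))) sequentially"
      using eventually_gt_at_top[of 0]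
    proof eventually_elim
      case (elim k)
      then have "1 / real (Suc k) * (1 / 2 + (1 / 2) * (1 / real k)) = 1 / real (2 * k)"
        by (simp add: field_simps)
      then show ?case by (simp add: h_def powr_powr count)
    qed
  qed
qed

text \<open>There are no idempotents of odd length, so the limit superior along all lengths is
  the limit along even lengths.\<close>

lemma idem_count_limsup:
  assumes r: "r \<ge> 2"
  shows "limsup (\<lambda>K. ereal (real (idem_count r K) powr (1 / real K))) = ereal (idem_growth r)"
proof -
  define f where "f K = ereal (real (idem_count r K) powr (1 / real K))" for K
  define g where "g k = real (idem_count r (2 * k)) powr (1 / real (2 * k))" for k
  have g: "g \<longlonglongrightarrow> idem_growth r" unfolding g_def by (rule idem_count_root_tendsto[OF r])
  have "f \<circ> (\<lambda>k. 2 * k) = (\<lambda>k. ereal (g k))" by (auto simp: f_def g_def)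
  then have "ereal (idem_growth r) = limsup (f \<circ> (\<lambda>k. 2 * k))"
    using g by (auto intro: lim_imp_Limsup[symmetric])
  also have "\<dots> \<le> limsup f" by (rule limsup_subseq_mono) (auto simp: strict_mono_def)
  finally have ge: "ereal (idem_growth r) \<le> limsup f" .
  have "filterlim (\<lambda>K::nat. K div 2) sequentially sequentially"
    unfolding filterlim_at_top
  proof
    fix Z :: nat
    show "eventually (\<lambda>K. Z \<le> K div 2) sequentially"
      using eventually_ge_at_top[of "2 * Z"] by eventually_elim auto
  qed
  then have "(\<lambda>K. g (K div 2)) \<longlonglongrightarrow> idem_growth r" by (rule filterlim_compose[OF g])
  then have "(\<lambda>K. ereal (g (K div 2))) \<longlonglongrightarrow> ereal (idem_growth r)" by (intro tendsto_intros)
  then have lim_div2: "limsup (\<lambda>K. ereal (g (K div 2))) = ereal (idem_growth r)"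
    by (rule lim_imp_Limsup[rotated]) simp
  have "f K \<le> ereal (g (K div 2))" for K
  proof (cases "even K")
    case False
    then obtain k where "K = Suc (2 * k)" by (metis oddE Suc_eq_plus1)
    then show ?thesis by (simp add: f_def g_def idem_count_odd)
  qed (auto simp: f_def g_def)
  then have "limsup f \<le> limsup (\<lambda>K. ereal (g (K div 2)))" by (intro Limsup_mono) auto
  then have "limsup f \<le> ereal (idem_growth r)" by (simp only: lim_div2)
  then show ?thesis using ge unfolding f_def by (rule antisym)
qed

lemma idem_growth_ratio_tendsto: "(\<lambda>r. idem_growth r / sqrt (exp 1 * (2 * real r - 1))) \<longlonglongrightarrow> 1"
proof -
  have sqrt_e: "sqrt (exp 1) = exp (1 / 2)"
    by (rule real_sqrt_unique) (simp_all add: power2_eq_square exp_add[symmetric])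
  define a where "a r = (1 + (1 / 2) / real (r - 1)) ^ (r - 1)" for r :: nat
  have "(\<lambda>n. a (Suc n)) \<longlonglongrightarrow> exp (1 / 2)"
    unfolding a_def using tendsto_exp_limit_sequentially[of "1 / 2"] by simp
  then have "a \<longlonglongrightarrow> exp (1 / 2)" by (rule LIMSEQ_imp_Suc)
  then have "(\<lambda>r. a r / exp (1 / 2)) \<longlonglongrightarrow> 1"
    using tendsto_divide[of a "exp (1 / 2)" sequentially "\<lambda>_. exp (1 / 2)" "exp (1 / 2)"] by simp
  then show ?thesis
  proof (rule Lim_transform_eventually)
    show "eventually (\<lambda>r. a r / exp (1 / 2) = idem_growth r / sqrt (exp 1 * (2 * real r - 1))) sequentially"
      using eventually_ge_at_top[of 2]
    proof eventually_elim
      case (elim r)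
      have "(2 * real r - 1) / (2 * real r - 2) = 1 + (1 / 2) / real (r - 1)"
        using elim by (simp add: of_nat_diff field_simps)
      moreover have "idem_growth r / sqrt (exp 1 * (2 * real r - 1))
          = ((2 * real r - 1) / (2 * real r - 2)) ^ (r - 1) / sqrt (exp 1)"
        using elim by (simp add: idem_growth_def real_sqrt_mult)
      ultimately show ?case by (simp add: a_def sqrt_e)
    qed
  qed
qed

theorem mainTheorem6:
  shows "(\<forall>r::nat. r \<ge> 2 \<longrightarrow>
            limsup (\<lambda>K. ereal (real (idem_count r K) powr (1 / real K))) = ereal (idem_growth r)
          \<and> (\<lambda>k. real (idem_count r (2 * k)) powr (1 / real (2 * k))) \<longlonglongrightarrow> idem_growth r)
       \<and> (\<lambda>r. idem_growth r / sqrt (exp 1 * (2 * real r - 1))) \<longlonglongrightarrow> 1"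
  using idem_count_limsup idem_count_root_tendsto idem_growth_ratio_tendsto by blast

end
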